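(* Assume $r(y,x_0)\in[-D,D]$, $\lambda>0$, and that there is $L>0$ such that for every intermediate state $x_s$ visited and every $x_0$, $l(x_0)=p_{\mathrm{ref}}(x_0\mid y,x_s)/p_{\mathrm{small}}(x_0\mid y,x_s)\le L$ (with $p_{\mathrm{small}}$ positive wherever $p_{\mathrm{ref}}$ is). Let $q(x_0\mid y)$ be the law of the output of Algorithm 2 with $M$ candidates, $K$ proposal samples per energy estimate, and $I$ guidance steps. For $\epsilon>0$ define $$g(\epsilon,M,K,L,\lambda,D)=\frac{e^{D/\lambda}-e^{-D/\lambda}}{2}\sqrt{\frac{4K\epsilon^2}{ML^2e^{2D/\lambda}}},$$ and suppose $C-\epsilon-g(\epsilon,M,K,L,\lambda,D)>0$. Then $$\mathsf{TV}\big(q(x_0\mid y)\,\|\,p(x_0\mid y)\big)\le I\left(\frac{2\epsilon+g(\epsilon,M,K,L,\lambda,D)}{C-\epsilon-g(\epsilon,M,K,L,\lambda,D)}\right)+4I\exp\!\left(-\frac{2K\epsilon^2}{L^2e^{2D/\lambda}}\right).$$ In particular, choosing $\epsilon=\tilde{\mathcal O}(1/\sqrt K)$ gives $g=\tilde{\mathcal O}(1/\sqrt M)$ and $\mathsf{TV}(q\|p)=\tilde{\mathcal O}(I/\sqrt M+I/\sqrt K)$.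
   Context: Setting: MLM framework with backward generation $x_T\to\cdots\to x_0$, $x_T$ the fixed fully masked sequence; reference model $p_{\mathrm{ref}}$, proposal model $p_{\mathrm{small}}$, query $y$. Target $p(x_0\mid y)=p_{\mathrm{ref}}(x_0\mid y)\exp(r(y,x_0)/\lambda)/C$ with $C=\sum_{x_0}p_{\mathrm{ref}}(x_0\mid y)\exp(r(y,x_0)/\lambda)$. Energy $\mathcal E(y,x_s)=\mathbb E_{p_{\mathrm{ref}}(x_0\mid y,x_s)}[\exp(r(y,x_0)/\lambda)]$ and its importance-sampling estimate $\widehat{\mathcal E}_{\mathrm{small}}(y,x_s)=\frac1K\sum_{k=1}^K\frac{p_{\mathrm{ref}}(x_0(k)\mid y,x_s)}{p_{\mathrm{small}}(x_0(k)\mid y,x_s)}\exp(r(y,x_0(k))/\lambda)$ with $x_0(k)$ i.i.d. from $p_{\mathrm{small}}(\cdot\mid y,x_s)$. Algorithm 2 (ETS-IS): timesteps $t_i=iT/I$; start at $x_{t_I}=x_T$; for $i=I,\dots,1$: draw $M$ candidates i.i.d. from $p_{\mathrm{ref}}(x_{t_{i-1}}\mid y,x_{t_i})$, compute $\widehat{\mathcal E}_{\mathrm{small}}$ for each, select candidate $m$ with probability proportional to its estimate, and set $x_{t_{i-1}}$ to it; output $x_0$. $\mathsf{TV}(p\|q)=\frac12\sum_x|p(x)-q(x)|$. *)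

theory Defs
  imports "HOL-Probability.Probability"
begin

text \<open>States (partially masked sequences) form a finite type 'x;
queries have type 'y. Time levels are indexed by i = 0..I, level i standing for
time t_i = i*T/I; level I is the fully masked sequence xT.
step y i x : the reference one-step backward kernel p_ref(x_{t_(i-1)} | y, x_{t_i} = x).\<close>

fun iid_pmf :: "nat \<Rightarrow> 'a pmf \<Rightarrow> 'a list pmf" where
  "iid_pmf 0 p = return_pmf []"
| "iid_pmf (Suc n) p = do { a \<leftarrow> p; as \<leftarrow> iid_pmf n p; return_pmf (a # as) }"

fun ref_down :: "(nat \<Rightarrow> 'x \<Rightarrow> 'x pmf) \<Rightarrow> nat \<Rightarrow> nat \<Rightarrow> 'x \<Rightarrow> 'x pmf" where
  "ref_down step 0 j x = return_pmf x"
| "ref_down step (Suc n) j x = bind_pmf (step (j + Suc n) x) (\<lambda>x'. ref_down step n j x')"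

definition ref_post :: "('y \<Rightarrow> nat \<Rightarrow> 'x \<Rightarrow> 'x pmf) \<Rightarrow> 'y \<Rightarrow> nat \<Rightarrow> 'x \<Rightarrow> 'x pmf" where
  "ref_post step y j x = ref_down (step y) j 0 x"

text \<open>Law of the reference chain at level j, started from xT at level I
(its support = the intermediate states that can be visited at level j).\<close>
definition ref_marg :: "('y \<Rightarrow> nat \<Rightarrow> 'x \<Rightarrow> 'x pmf) \<Rightarrow> 'y \<Rightarrow> nat \<Rightarrow> 'x \<Rightarrow> nat \<Rightarrow> 'x pmf" where
  "ref_marg step y I xT j = ref_down (step y) (I - j) j xT"

definition norm_const :: "('y \<Rightarrow> nat \<Rightarrow> 'x::finite \<Rightarrow> 'x pmf) \<Rightarrow> ('y \<Rightarrow> 'x \<Rightarrow> real) \<Rightarrow> real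
    \<Rightarrow> 'y \<Rightarrow> nat \<Rightarrow> 'x \<Rightarrow> real" where
  "norm_const step r lam y I xT =
     (\<Sum>x0\<in>UNIV. pmf (ref_post step y I xT) x0 * exp (r y x0 / lam))"

definition target :: "('y \<Rightarrow> nat \<Rightarrow> 'x::finite \<Rightarrow> 'x pmf) \<Rightarrow> ('y \<Rightarrow> 'x \<Rightarrow> real) \<Rightarrow> real
    \<Rightarrow> 'y \<Rightarrow> nat \<Rightarrow> 'x \<Rightarrow> 'x \<Rightarrow> real" where
  "target step r lam y I xT x0 =
     pmf (ref_post step y I xT) x0 * exp (r y x0 / lam) / norm_const step r lam y I xT"

definition energy_hat ::
  "('y \<Rightarrow> nat \<Rightarrow> 'x \<Rightarrow> 'x pmf) \<Rightarrow> ('y \<Rightarrow> nat \<Rightarrow> 'x \<Rightarrow> 'x pmf) \<Rightarrow> ('y \<Rightarrow> 'x \<Rightarrow> real) \<Rightarrow> real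
    \<Rightarrow> 'y \<Rightarrow> nat \<Rightarrow> 'x \<Rightarrow> 'x list \<Rightarrow> real" where
  "energy_hat step small r lam y j xs samples =
     (\<Sum>x0\<leftarrow>samples. pmf (ref_post step y j xs) x0 / pmf (small y j xs) x0 * exp (r y x0 / lam))
       / real (length samples)"

definition energy_est ::
  "('y \<Rightarrow> nat \<Rightarrow> 'x \<Rightarrow> 'x pmf) \<Rightarrow> ('y \<Rightarrow> nat \<Rightarrow> 'x \<Rightarrow> 'x pmf) \<Rightarrow> ('y \<Rightarrow> 'x \<Rightarrow> real) \<Rightarrow> real
    \<Rightarrow> nat \<Rightarrow> 'y \<Rightarrow> nat \<Rightarrow> 'x \<Rightarrow> real pmf" where
  "energy_est step small r lam K y j xs =
     map_pmf (energy_hat step small r lam y j xs) (iid_pmf K (small y j xs))"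

text \<open>Selection of an index m < M with probability proportional to the nonnegative
weights w_m (convention: uniformly if all weights vanish).\<close>
definition select_index :: "real list \<Rightarrow> nat pmf" where
  "select_index ws =
     (let S = sum_list ws; M = length ws in
      if S = 0 then pmf_of_list (map (\<lambda>m. (m, 1 / real M)) [0..<M])
      else pmf_of_list (map (\<lambda>m. (m, ws ! m / S)) [0..<M]))"

definition ets_step ::
  "('y \<Rightarrow> nat \<Rightarrow> 'x \<Rightarrow> 'x pmf) \<Rightarrow> ('y \<Rightarrow> nat \<Rightarrow> 'x \<Rightarrow> 'x pmf) \<Rightarrow> ('y \<Rightarrow> 'x \<Rightarrow> real) \<Rightarrow> real
    \<Rightarrow> nat \<Rightarrow> nat \<Rightarrow> 'y \<Rightarrow> nat \<Rightarrow> 'x \<Rightarrow> 'x pmf" where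
  "ets_step step small r lam M K y i x =
     do { ces \<leftarrow> iid_pmf M (do { c \<leftarrow> step y i x;
                                  e \<leftarrow> energy_est step small r lam K y (i - 1) c;
                                  return_pmf (c, e) });
          m \<leftarrow> select_index (map snd ces);
          return_pmf (fst (ces ! m)) }"

fun ets_run ::
  "('y \<Rightarrow> nat \<Rightarrow> 'x \<Rightarrow> 'x pmf) \<Rightarrow> ('y \<Rightarrow> nat \<Rightarrow> 'x \<Rightarrow> 'x pmf) \<Rightarrow> ('y \<Rightarrow> 'x \<Rightarrow> real) \<Rightarrow> real
    \<Rightarrow> nat \<Rightarrow> nat \<Rightarrow> 'y \<Rightarrow> nat \<Rightarrow> 'x \<Rightarrow> 'x pmf" where
  "ets_run step small r lam M K y 0 x = return_pmf x"
| "ets_run step small r lam M K y (Suc i) x =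
     bind_pmf (ets_step step small r lam M K y (Suc i) x) (ets_run step small r lam M K y i)"

definition ets_output ::
  "('y \<Rightarrow> nat \<Rightarrow> 'x \<Rightarrow> 'x pmf) \<Rightarrow> ('y \<Rightarrow> nat \<Rightarrow> 'x \<Rightarrow> 'x pmf) \<Rightarrow> ('y \<Rightarrow> 'x \<Rightarrow> real) \<Rightarrow> real
    \<Rightarrow> nat \<Rightarrow> nat \<Rightarrow> nat \<Rightarrow> 'y \<Rightarrow> 'x \<Rightarrow> 'x pmf" where
  "ets_output step small r lam M K I y xT = ets_run step small r lam M K y I xT"

definition TV :: "('x::finite \<Rightarrow> real) \<Rightarrow> ('x \<Rightarrow> real) \<Rightarrow> real" where
  "TV p q = (1/2) * (\<Sum>x\<in>UNIV. \<bar>p x - q x\<bar>)"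

definition g_fun :: "real \<Rightarrow> nat \<Rightarrow> nat \<Rightarrow> real \<Rightarrow> real \<Rightarrow> real \<Rightarrow> real" where
  "g_fun \<epsilon> M K L lam D =
     (exp (D / lam) - exp (- D / lam)) / 2
       * sqrt (4 * real K * \<epsilon>^2 / (real M * L^2 * exp (2 * D / lam)))"

end

theory Submission
  imports Defs
begin

text \<open>The target is the reference chain tilted by \<open>exp (r / lambda)\<close>, and this tilt factorises
along the chain (a Doob transform): from \<open>x_{t_i}\<close> the tilted chain moves by
\<open>p_ref (. | x_{t_i})\<close> reweighted by the energy one level down. A guidance step of Algorithm 2 is
a sampling-importance-resampling approximation of this reweighting; its total variation error is
at most \<open>E |S/M - Z| / (2 Z)\<close>, where \<open>S/M\<close> is the mean of the \<open>M\<close> estimated energies and \<open>Z\<close>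
their common mean. Second-moment bounds (Popoviciu's inequality for the spread of the candidates'
energies, the likelihood-ratio bound \<open>L\<close> for the importance-sampling noise) make this
\<open>O (1 / sqrt M + 1 / sqrt (K M))\<close>. Weighted by the energies, the step errors add up to
\<open>I (eps + g) / (2 C)\<close> whenever \<open>L^2 exp (2 D / lambda) \<le> 4 K eps^2\<close>; otherwise the exponential
term of the bound alone exceeds \<open>1\<close>, so no concentration inequality is needed.\<close>

abbreviation expect :: "'a pmf \<Rightarrow> ('a \<Rightarrow> real) \<Rightarrow> real" where
  "expect p f \<equiv> measure_pmf.expectation p f"

lemma expect_bind:
  assumes "finite (set_pmf p)" "\<And>a. a \<in> set_pmf p \<Longrightarrow> finite (set_pmf (f a))"
  shows "expect (bind_pmf p f) h = expect p (\<lambda>a. expect (f a) h)"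
proof -
  have "expect (bind_pmf p f) h = (\<Sum>a\<in>set_pmf p. pmf p a *\<^sub>R expect (f a) h)"
    by (rule pmf_expectation_bind) (use assms in auto)
  also have "\<dots> = expect p (\<lambda>a. expect (f a) h)"
    by (rule integral_measure_pmf[symmetric]) (use assms in auto)
  finally show ?thesis .
qed

lemma expect_add:
  "finite (set_pmf p) \<Longrightarrow> expect p (\<lambda>x. f x + g x) = expect p f + expect p g"
  by (rule Bochner_Integration.integral_add) (auto simp: integrable_measure_pmf_finite)

lemma expect_diff:
  "finite (set_pmf p) \<Longrightarrow> expect p (\<lambda>x. f x - g x) = expect p f - expect p g"
  by (rule Bochner_Integration.integral_diff) (auto simp: integrable_measure_pmf_finite)

lemma expect_sum:
  "finite (set_pmf p) \<Longrightarrow> expect p (\<lambda>x. \<Sum>i\<in>I. f i x) = (\<Sum>i\<in>I. expect p (f i))"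
  by (rule Bochner_Integration.integral_sum) (auto simp: integrable_measure_pmf_finite)

lemma expect_mono:
  "finite (set_pmf p) \<Longrightarrow> (\<And>x. x \<in> set_pmf p \<Longrightarrow> f x \<le> g x) \<Longrightarrow> expect p f \<le> expect p g"
  by (rule integral_mono_AE) (auto simp: integrable_measure_pmf_finite AE_measure_pmf_iff)

lemma expect_cong:
  "(\<And>x. x \<in> set_pmf p \<Longrightarrow> f x = g x) \<Longrightarrow> expect p f = expect p g"
  by (rule integral_cong_AE) (auto simp: AE_measure_pmf_iff)

lemma expect_finite_UNIV:
  fixes p :: "'a::finite pmf"
  shows "expect p f = (\<Sum>x\<in>UNIV. pmf p x * f x)"
  by (subst integral_measure_pmf_real[of UNIV]) (auto simp: mult.commute)

lemma expect_pos:
  fixes p :: "'a::finite pmf"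
  assumes "\<And>x. f x > 0"
  shows "expect p f > 0"
proof -
  obtain a where "a \<in> set_pmf p" using set_pmf_not_empty by fast
  then show ?thesis unfolding expect_finite_UNIV
    by (intro sum_pos2[of UNIV a]) (auto simp: set_pmf_iff assms less_imp_le)
qed

lemma expect_abs_le_sqrt_expect_square:
  assumes "finite (set_pmf p)"
  shows "expect p (\<lambda>a. \<bar>f a\<bar>) \<le> sqrt (expect p (\<lambda>a. (f a)\<^sup>2))"
proof -
  have "0 \<le> measure_pmf.variance p (\<lambda>a. \<bar>f a\<bar>)"
    by (rule measure_pmf.variance_positive)
  also have "measure_pmf.variance p (\<lambda>a. \<bar>f a\<bar>) = expect p (\<lambda>a. (f a)\<^sup>2) - (expect p (\<lambda>a. \<bar>f a\<bar>))\<^sup>2"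
    by (subst measure_pmf.variance_eq) (auto simp: integrable_measure_pmf_finite assms)
  finally show ?thesis by (simp add: real_le_rsqrt)
qed

lemma popoviciu_inequality:
  assumes fin: "finite (set_pmf p)" and range: "\<And>x. x \<in> set_pmf p \<Longrightarrow> lo \<le> f x \<and> f x \<le> hi"
  shows "expect p (\<lambda>x. (f x - expect p f)\<^sup>2) \<le> (hi - lo)\<^sup>2 / 4"
proof -
  define m where "m = expect p f"
  \<comment> \<open>\<open>(f - m)\<^sup>2 \<le> (f - m)\<^sup>2 + (hi - f) (f - lo)\<close>, which is affine in \<open>f\<close>\<close>
  have "expect p (\<lambda>x. (f x - m)\<^sup>2) \<le> expect p (\<lambda>x. (hi + lo - 2 * m) * f x + (m\<^sup>2 - hi * lo))"
  proof (rule expect_mono[OF fin])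
    fix x assume "x \<in> set_pmf p"
    then have "0 \<le> (hi - f x) * (f x - lo)" using range by auto
    then show "(f x - m)\<^sup>2 \<le> (hi + lo - 2 * m) * f x + (m\<^sup>2 - hi * lo)"
      by (simp add: power2_eq_square algebra_simps)
  qed
  also have "\<dots> = (hi + lo - 2 * m) * m + (m\<^sup>2 - hi * lo)"
    by (simp add: expect_add fin m_def)
  also have "\<dots> = (hi - lo)\<^sup>2 / 4 - ((hi + lo) / 2 - m)\<^sup>2"
    by (simp add: power2_eq_square field_simps)
  also have "\<dots> \<le> (hi - lo)\<^sup>2 / 4" by simp
  finally show ?thesis by (simp add: m_def)
qed

lemma finite_set_iid_pmf: "finite (set_pmf p) \<Longrightarrow> finite (set_pmf (iid_pmf n p))"
  by (induction n) auto

lemma set_iid_pmfD: "as \<in> set_pmf (iid_pmf n p) \<Longrightarrow> length as = n \<and> set as \<subseteq> set_pmf p"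
  by (induction n arbitrary: as) fastforce+

lemma expect_iid_pmf_Suc:
  "finite (set_pmf p) \<Longrightarrow>
    expect (iid_pmf (Suc n) p) h = expect p (\<lambda>a. expect (iid_pmf n p) (\<lambda>as. h (a # as)))"
  by (simp add: expect_bind finite_set_iid_pmf)

lemma expect_iid_sum:
  assumes "finite (set_pmf p)"
  shows "expect (iid_pmf n p) (\<lambda>as. sum_list (map f as)) = real n * expect p f"
proof (induction n)
  case (Suc n)
  have "expect (iid_pmf (Suc n) p) (\<lambda>as. sum_list (map f as))
      = expect p (\<lambda>a. f a + real n * expect p f)"
    by (subst expect_iid_pmf_Suc[OF assms]) (simp add: expect_add finite_set_iid_pmf assms Suc)
  then show ?case by (simp add: expect_add assms algebra_simps)
qed simp

lemma expect_iid_sum_square: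
  assumes fin: "finite (set_pmf p)" and centred: "expect p f = 0"
  shows "expect (iid_pmf n p) (\<lambda>as. (sum_list (map f as))\<^sup>2) = real n * expect p (\<lambda>a. (f a)\<^sup>2)"
proof (induction n)
  case (Suc n)
  have fin_n: "finite (set_pmf (iid_pmf n p))" by (rule finite_set_iid_pmf[OF fin])
  have cross: "expect (iid_pmf n p) (\<lambda>as. sum_list (map f as)) = 0"
    by (simp add: expect_iid_sum[OF fin] centred)
  have "expect (iid_pmf (Suc n) p) (\<lambda>as. (sum_list (map f as))\<^sup>2)
      = expect p (\<lambda>a. expect (iid_pmf n p)
          (\<lambda>as. (f a)\<^sup>2 + 2 * f a * sum_list (map f as) + (sum_list (map f as))\<^sup>2))"
    by (subst expect_iid_pmf_Suc[OF fin]) (simp add: power2_sum add_ac)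
  also have "\<dots> = expect p (\<lambda>a. (f a)\<^sup>2 + real n * expect p (\<lambda>a. (f a)\<^sup>2))"
    by (simp add: integral_add integrable_measure_pmf_finite fin_n cross Suc)
  finally show ?case by (simp add: expect_add fin algebra_simps)
qed simp

lemma expect_abs_iid_mean_le:
  assumes fin: "finite (set_pmf p)" and centred: "expect p f = 0"
    and second_moment: "expect p (\<lambda>a. (f a)\<^sup>2) \<le> V" and n: "n \<ge> 1"
  shows "expect (iid_pmf n p) (\<lambda>as. \<bar>sum_list (map f as)\<bar> / real n) \<le> sqrt (V / real n)"
proof -
  have "expect (iid_pmf n p) (\<lambda>as. \<bar>sum_list (map f as)\<bar> / real n)
      \<le> sqrt (expect (iid_pmf n p) (\<lambda>as. (sum_list (map f as))\<^sup>2)) / real n"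
    using expect_abs_le_sqrt_expect_square[OF finite_set_iid_pmf[OF fin]] by (simp add: divide_right_mono)
  also have "\<dots> \<le> sqrt (real n * V) / real n"
    using second_moment by (simp add: expect_iid_sum_square[OF fin centred] mult_left_mono divide_right_mono)
  also have "\<dots> = sqrt (real n * V / (real n)\<^sup>2)"
    by (simp add: real_sqrt_divide)
  also have "\<dots> = sqrt (V / real n)"
    using n by (simp add: power2_eq_square)
  finally show ?thesis .
qed

section \<open>Importance sampling\<close>

definition is_estimate :: "'a pmf \<Rightarrow> 'a pmf \<Rightarrow> ('a \<Rightarrow> real) \<Rightarrow> 'a list \<Rightarrow> real" where
  "is_estimate pr sm W s = (\<Sum>x0\<leftarrow>s. pmf pr x0 / pmf sm x0 * W x0) / real (length s)"

lemma expect_importance_weight: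
  fixes pr sm :: "'a::finite pmf"
  assumes dom: "\<And>x0. pmf pr x0 > 0 \<Longrightarrow> pmf sm x0 > 0"
  shows "expect sm (\<lambda>x0. pmf pr x0 / pmf sm x0 * W x0) = expect pr W"
  unfolding expect_finite_UNIV
proof (rule sum.cong[OF refl])
  fix x0
  have "pmf sm x0 = 0 \<Longrightarrow> pmf pr x0 = 0"
    using dom[of x0] pmf_nonneg[of pr x0] by linarith
  then show "pmf sm x0 * (pmf pr x0 / pmf sm x0 * W x0) = pmf pr x0 * W x0"
    by (cases "pmf sm x0 = 0") auto
qed

lemma is_estimate_iid:
  assumes "s \<in> set_pmf (iid_pmf K sm)"
  shows "is_estimate pr sm W s = (\<Sum>x0\<leftarrow>s. pmf pr x0 / pmf sm x0 * W x0) / real K"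
  using set_iid_pmfD[OF assms] by (simp add: is_estimate_def)

lemma expect_is_estimate:
  fixes pr sm :: "'a::finite pmf"
  assumes dom: "\<And>x0. pmf pr x0 > 0 \<Longrightarrow> pmf sm x0 > 0" and K: "K \<ge> 1"
  shows "expect (iid_pmf K sm) (is_estimate pr sm W) = expect pr W"
proof -
  have "expect (iid_pmf K sm) (is_estimate pr sm W)
      = expect (iid_pmf K sm) (\<lambda>s. (\<Sum>x0\<leftarrow>s. pmf pr x0 / pmf sm x0 * W x0) / real K)"
    by (rule expect_cong) (rule is_estimate_iid)
  also have "\<dots> = expect sm (\<lambda>x0. pmf pr x0 / pmf sm x0 * W x0)"
    using K by (simp add: expect_iid_sum)
  also have "\<dots> = expect pr W"
    by (rule expect_importance_weight[OF dom])
  finally show ?thesis .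
qed

lemma is_estimate_mean_square_error:
  fixes pr sm :: "'a::finite pmf"
  assumes dom: "\<And>x0. pmf pr x0 > 0 \<Longrightarrow> pmf sm x0 > 0" and K: "K \<ge> 1"
    and ratio: "\<And>x0. pmf pr x0 / pmf sm x0 \<le> L"
    and W_range: "\<And>x0. 0 \<le> W x0 \<and> W x0 \<le> hi"
  shows "expect (iid_pmf K sm) (\<lambda>s. (is_estimate pr sm W s - expect pr W)\<^sup>2) \<le> (L * hi)\<^sup>2 / (4 * real K)"
proof -
  define t where "t = (\<lambda>x0. pmf pr x0 / pmf sm x0 * W x0)"
  have mean_t: "expect sm t = expect pr W"
    unfolding t_def by (rule expect_importance_weight[OF dom])
  have "expect (iid_pmf K sm) (\<lambda>s. (is_estimate pr sm W s - expect pr W)\<^sup>2)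
      = expect (iid_pmf K sm) (\<lambda>s. (sum_list (map (\<lambda>x0. t x0 - expect pr W) s))\<^sup>2) / (real K)\<^sup>2"
  proof (simp only: Bochner_Integration.integral_divide_zero[symmetric], rule expect_cong)
    fix s assume s: "s \<in> set_pmf (iid_pmf K sm)"
    have "sum_list (map (\<lambda>x0. t x0 - expect pr W) s) = sum_list (map t s) - real K * expect pr W"
      using set_iid_pmfD[OF s] by (simp add: sum_list_subtractf sum_list_triv)
    moreover have "is_estimate pr sm W s - expect pr W = (sum_list (map t s) - real K * expect pr W) / real K"
      using K by (simp add: is_estimate_iid[OF s] t_def field_simps)
    ultimately show "(is_estimate pr sm W s - expect pr W)\<^sup>2
        = (sum_list (map (\<lambda>x0. t x0 - expect pr W) s))\<^sup>2 / (real K)\<^sup>2"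
      by (simp add: power_divide)
  qed
  also have "\<dots> = real K * expect sm (\<lambda>x0. (t x0 - expect sm t)\<^sup>2) / (real K)\<^sup>2"
    by (simp add: expect_iid_sum_square expect_diff mean_t)
  also have "\<dots> \<le> real K * ((L * hi - 0)\<^sup>2 / 4) / (real K)\<^sup>2"
  proof -
    have "0 \<le> t x0 \<and> t x0 \<le> L * hi" for x0
    proof -
      have "0 \<le> pmf pr x0 / pmf sm x0" by simp
      moreover have "pmf pr x0 / pmf sm x0 * W x0 \<le> L * hi"
        using W_range[of x0] ratio[of x0] \<open>0 \<le> pmf pr x0 / pmf sm x0\<close> by (intro mult_mono) linarith+
      ultimately show ?thesis
        unfolding t_def using W_range[of x0] by simp
    qed
    then have "expect sm (\<lambda>x0. (t x0 - expect sm t)\<^sup>2) \<le> (L * hi - 0)\<^sup>2 / 4"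
      by (intro popoviciu_inequality) auto
    then show ?thesis by (intro divide_right_mono mult_left_mono) simp_all
  qed
  also have "\<dots> = (L * hi)\<^sup>2 / (4 * real K)"
    using K by (simp add: power2_eq_square)
  finally show ?thesis .
qed

section \<open>Sampling-importance-resampling\<close>

definition dep_pair_pmf :: "'a pmf \<Rightarrow> ('a \<Rightarrow> 'b pmf) \<Rightarrow> ('a \<times> 'b) pmf" where
  "dep_pair_pmf P est = bind_pmf P (\<lambda>c. bind_pmf (est c) (\<lambda>e. return_pmf (c, e)))"

definition resample :: "('a \<times> real) list \<Rightarrow> 'a pmf" where
  "resample ces = map_pmf (\<lambda>m. fst (ces ! m)) (select_index (map snd ces))"

definition sir_pmf :: "nat \<Rightarrow> 'a pmf \<Rightarrow> ('a \<Rightarrow> real pmf) \<Rightarrow> 'a pmf" where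
  "sir_pmf M P est = bind_pmf (iid_pmf M (dep_pair_pmf P est)) resample"

definition weight_of :: "('a \<times> real) list \<Rightarrow> 'a \<Rightarrow> real" where
  "weight_of ces c = sum_list (map (\<lambda>z. if fst z = c then snd z else 0) ces)"

definition tilt :: "'a pmf \<Rightarrow> ('a \<Rightarrow> real) \<Rightarrow> 'a \<Rightarrow> real" where
  "tilt p w x = pmf p x * w x / expect p w"

lemma finite_set_dep_pair_pmf:
  "finite (set_pmf P) \<Longrightarrow> (\<And>c. finite (set_pmf (est c))) \<Longrightarrow> finite (set_pmf (dep_pair_pmf P est))"
  by (simp add: dep_pair_pmf_def)

lemma expect_dep_pair_pmf:
  "finite (set_pmf P) \<Longrightarrow> (\<And>c. finite (set_pmf (est c))) \<Longrightarrow>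
    expect (dep_pair_pmf P est) h = expect P (\<lambda>c. expect (est c) (\<lambda>e. h (c, e)))"
  by (simp add: dep_pair_pmf_def expect_bind)

lemma sum_weight_of:
  fixes ces :: "('a::finite \<times> real) list"
  shows "(\<Sum>c\<in>UNIV. weight_of ces c) = sum_list (map snd ces)"
  by (induction ces) (simp_all add: weight_of_def sum.distrib)

lemma weight_of_nonneg:
  "(\<And>z. z \<in> set ces \<Longrightarrow> 0 \<le> snd z) \<Longrightarrow> 0 \<le> weight_of ces c"
  unfolding weight_of_def by (rule sum_list_nonneg) auto

lemma pmf_resample:
  assumes nonneg: "\<And>z. z \<in> set ces \<Longrightarrow> 0 \<le> snd z" and S: "sum_list (map snd ces) \<noteq> 0"
  shows "pmf (resample ces) c = weight_of ces c / sum_list (map snd ces)"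
proof -
  define S where "S = sum_list (map snd ces)"
  define xs where "xs = map (\<lambda>k. (k, snd (ces ! k) / S)) [0..<length ces]"
  have S_nth: "S = (\<Sum>k<length ces. snd (ces ! k))"
    by (simp add: S_def sum_list_sum_nth lessThan_atLeast0)
  have "0 \<le> S" unfolding S_def by (rule sum_list_nonneg) (use nonneg in auto)
  have wf: "pmf_of_list_wf xs"
  proof (rule pmf_of_list_wfI)
    show "0 \<le> x" if "x \<in> set (map snd xs)" for x
      using that nonneg[OF nth_mem] \<open>0 \<le> S\<close> by (auto simp: xs_def)
    have "sum_list (map snd xs) = (\<Sum>k<length ces. snd (ces ! k)) / S"
      by (simp add: xs_def comp_def sum_list_sum_nth lessThan_atLeast0 sum_divide_distrib)
    then show "sum_list (map snd xs) = 1"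
      using S by (simp add: S_nth[symmetric] S_def)
  qed
  have "select_index (map snd ces) = pmf_of_list xs"
    using S by (auto simp: select_index_def Let_def xs_def S_def intro!: arg_cong[where f = pmf_of_list])
  then have "pmf (resample ces) c = measure (pmf_of_list xs) {k. fst (ces ! k) = c}"
    by (simp add: resample_def pmf_map vimage_def)
  also have "\<dots> = (\<Sum>k<length ces. if fst (ces ! k) = c then snd (ces ! k) / S else 0)"
    unfolding measure_pmf_of_list[OF wf]
    by (auto simp: xs_def sum_list_map_filter' interv_sum_list_conv_sum_set_nat lessThan_atLeast0
        intro!: sum.cong)
  also have "\<dots> = weight_of ces c / S"
    by (auto simp: weight_of_def sum_list_sum_nth lessThan_atLeast0 sum_divide_distrib intro!: sum.cong)
  finally show ?thesis by (simp add: S_def)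
qed

lemma TV_expect_le:
  fixes F G :: "'a \<Rightarrow> 'x::finite \<Rightarrow> real"
  assumes fin: "finite (set_pmf X)"
  shows "TV (\<lambda>c. expect X (\<lambda>a. F a c)) (\<lambda>c. expect X (\<lambda>a. G a c)) \<le> expect X (\<lambda>a. TV (F a) (G a))"
proof -
  have "TV (\<lambda>c. expect X (\<lambda>a. F a c)) (\<lambda>c. expect X (\<lambda>a. G a c))
      = (\<Sum>c\<in>UNIV. \<bar>expect X (\<lambda>a. F a c - G a c)\<bar>) / 2"
    by (simp add: TV_def expect_diff fin)
  also have "\<dots> \<le> (\<Sum>c\<in>UNIV. expect X (\<lambda>a. \<bar>F a c - G a c\<bar>)) / 2"
    by (intro divide_right_mono sum_mono integral_abs_bound) simp
  also have "\<dots> = expect X (\<lambda>a. TV (F a) (G a))"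
    by (simp add: TV_def expect_sum fin)
  finally show ?thesis .
qed

lemma TV_resample_le:
  fixes ces :: "('x::finite \<times> real) list"
  assumes nonneg: "\<And>z. z \<in> set ces \<Longrightarrow> 0 \<le> snd z" and ne: "ces \<noteq> []" and Ew: "Ew > 0"
  shows "TV (pmf (resample ces)) (\<lambda>c. weight_of ces c / (real (length ces) * Ew))
    \<le> \<bar>sum_list (map snd ces) / real (length ces) - Ew\<bar> / (2 * Ew)"
proof -
  define S where "S = sum_list (map snd ces)"
  define M where "M = real (length ces)"
  have "M > 0" using ne by (simp add: M_def)
  have w_nonneg: "0 \<le> weight_of ces c" for c by (rule weight_of_nonneg[OF nonneg])
  have w_le: "weight_of ces c \<le> S" for c
    unfolding S_def sum_weight_of[symmetric] by (rule member_le_sum) (use w_nonneg in auto)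
  show ?thesis
  proof (cases "S = 0")
    case True
    \<comment> \<open>all weights vanish (the uniform fallback of \<open>select_index\<close>): both sides equal \<open>1/2\<close>\<close>
    then have "weight_of ces c = 0" for c using w_le[of c] w_nonneg[of c] by simp
    then show ?thesis using True Ew by (simp add: TV_def S_def sum_pmf_eq_1)
  next
    case False
    then have "S > 0" using w_le w_nonneg by (metis order.order_iff_strict order.trans)
    have "TV (pmf (resample ces)) (\<lambda>c. weight_of ces c / (M * Ew))
        = (\<Sum>c\<in>UNIV. weight_of ces c * \<bar>1 / S - 1 / (M * Ew)\<bar>) / 2"
    proof -
      have "\<bar>weight_of ces c / S - weight_of ces c / (M * Ew)\<bar> = weight_of ces c * \<bar>1 / S - 1 / (M * Ew)\<bar>" for c
      proof -
        have "weight_of ces c / S - weight_of ces c / (M * Ew) = weight_of ces c * (1 / S - 1 / (M * Ew))"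
          by (simp add: right_diff_distrib)
        then show ?thesis using w_nonneg[of c] by (simp add: abs_mult)
      qed
      then show ?thesis
        using False by (simp add: TV_def pmf_resample[OF nonneg] S_def)
    qed
    also have "\<dots> = \<bar>S * (1 / S - 1 / (M * Ew))\<bar> / 2"
      using \<open>S > 0\<close> by (simp add: sum_distrib_right[symmetric] S_def sum_weight_of abs_mult)
    also have "S * (1 / S - 1 / (M * Ew)) = (Ew - S / M) / Ew"
      using \<open>S > 0\<close> \<open>M > 0\<close> Ew by (simp add: field_simps)
    finally show ?thesis
      using Ew by (simp add: M_def S_def abs_minus_commute)
  qed
qed

lemma TV_sir_pmf_tilt_le:
  fixes P :: "'x::finite pmf" and est :: "'x \<Rightarrow> real pmf"
  assumes fin: "\<And>c. finite (set_pmf (est c))"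
    and nonneg: "\<And>c e. c \<in> set_pmf P \<Longrightarrow> e \<in> set_pmf (est c) \<Longrightarrow> 0 \<le> e"
    and unbiased: "\<And>c. c \<in> set_pmf P \<Longrightarrow> expect (est c) (\<lambda>e. e) = w c"
    and pos: "expect P w > 0" and M: "M \<ge> 1"
  shows "TV (pmf (sir_pmf M P est)) (tilt P w)
    \<le> expect (iid_pmf M (dep_pair_pmf P est)) (\<lambda>ces. \<bar>sum_list (map snd ces) / real M - expect P w\<bar>)
        / (2 * expect P w)"
proof -
  let ?J = "dep_pair_pmf P est" and ?Ew = "expect P w"
  have fin_J: "finite (set_pmf ?J)" by (simp add: finite_set_dep_pair_pmf fin)
  have fin_iid: "finite (set_pmf (iid_pmf M ?J))" by (rule finite_set_iid_pmf[OF fin_J])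
  have sample: "length ces = M" "\<And>z. z \<in> set ces \<Longrightarrow> 0 \<le> snd z"
    if "ces \<in> set_pmf (iid_pmf M ?J)" for ces
    using set_iid_pmfD[OF that] nonneg by (auto simp: dep_pair_pmf_def)
  have sir: "pmf (sir_pmf M P est) c = expect (iid_pmf M ?J) (\<lambda>ces. pmf (resample ces) c)" for c
    by (simp add: sir_pmf_def pmf_bind)
  have tilt: "tilt P w c = expect (iid_pmf M ?J) (\<lambda>ces. weight_of ces c / (real M * ?Ew))" for c
  proof -
    have "expect ?J (\<lambda>z. if fst z = c then snd z else 0)
        = expect P (\<lambda>c'. expect (est c') (\<lambda>e. if c' = c then e else 0))"
      by (simp add: expect_dep_pair_pmf fin cong: if_cong)
    also have "\<dots> = expect P (\<lambda>c'. if c' = c then w c' else 0)"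
      by (rule expect_cong) (auto simp: unbiased)
    also have "\<dots> = pmf P c * w c"
      by (subst integral_measure_pmf_real[of "{c}"]) (auto split: if_splits)
    finally show ?thesis
      using M by (simp add: tilt_def weight_of_def expect_iid_sum[OF fin_J])
  qed
  have "TV (pmf (sir_pmf M P est)) (tilt P w)
      \<le> expect (iid_pmf M ?J) (\<lambda>ces. TV (pmf (resample ces)) (\<lambda>c. weight_of ces c / (real M * ?Ew)))"
    unfolding sir tilt by (rule TV_expect_le[OF fin_iid])
  also have "\<dots> \<le> expect (iid_pmf M ?J) (\<lambda>ces. \<bar>sum_list (map snd ces) / real M - ?Ew\<bar> / (2 * ?Ew))"
  proof (rule expect_mono[OF fin_iid])
    fix ces assume "ces \<in> set_pmf (iid_pmf M ?J)"
    with sample[OF this] M show "TV (pmf (resample ces)) (\<lambda>c. weight_of ces c / (real M * ?Ew))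
        \<le> \<bar>sum_list (map snd ces) / real M - ?Ew\<bar> / (2 * ?Ew)"
      using TV_resample_le[of ces ?Ew] pos by fastforce
  qed
  finally show ?thesis by simp
qed

lemma abs_mean_dev_le:
  assumes "length zs = M" "M \<ge> 1"
  shows "\<bar>sum_list (map snd zs) / real M - m\<bar>
    \<le> \<bar>\<Sum>z\<leftarrow>zs. snd z - w (fst z)\<bar> / real M + \<bar>\<Sum>z\<leftarrow>zs. w (fst z) - m\<bar> / real M"
proof -
  have "(\<Sum>z\<leftarrow>zs. snd z - w (fst z)) + (\<Sum>z\<leftarrow>zs. w (fst z) - m) = sum_list (map snd zs) - real M * m"
    using assms by (simp add: sum_list_addf[symmetric] sum_list_subtractf sum_list_triv)
  then have "sum_list (map snd zs) / real M - m
      = (\<Sum>z\<leftarrow>zs. snd z - w (fst z)) / real M + (\<Sum>z\<leftarrow>zs. w (fst z) - m) / real M"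
    using assms by (simp add: field_simps)
  then show ?thesis
    using abs_triangle_ineq[of "(\<Sum>z\<leftarrow>zs. snd z - w (fst z)) / real M" "(\<Sum>z\<leftarrow>zs. w (fst z) - m) / real M"]
    by (simp add: abs_divide)
qed

lemma expect_abs_sample_mean_dev_le:
  fixes est :: "'a \<Rightarrow> real pmf"
  assumes fin_P: "finite (set_pmf P)" and fin: "\<And>c. finite (set_pmf (est c))"
    and unbiased: "\<And>c. c \<in> set_pmf P \<Longrightarrow> expect (est c) (\<lambda>e. e) = w c"
    and variance: "\<And>c. c \<in> set_pmf P \<Longrightarrow> expect (est c) (\<lambda>e. (e - w c)\<^sup>2) \<le> V"
    and range: "\<And>c. c \<in> set_pmf P \<Longrightarrow> lo \<le> w c \<and> w c \<le> hi"
    and M: "M \<ge> 1"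
  shows "expect (iid_pmf M (dep_pair_pmf P est)) (\<lambda>ces. \<bar>sum_list (map snd ces) / real M - expect P w\<bar>)
    \<le> sqrt (V / real M) + (hi - lo) / (2 * sqrt (real M))"
proof -
  let ?J = "dep_pair_pmf P est" and ?Ew = "expect P w"
  define noise where "noise z = snd z - w (fst z)" for z :: "'a \<times> real"
  define spread where "spread z = w (fst z) - ?Ew" for z :: "'a \<times> real"
  have fin_J: "finite (set_pmf ?J)" by (rule finite_set_dep_pair_pmf[OF fin_P fin])
  have fin_iid: "finite (set_pmf (iid_pmf M ?J))" by (rule finite_set_iid_pmf[OF fin_J])
  have expect_J: "expect ?J h = expect P (\<lambda>c. expect (est c) (\<lambda>e. h (c, e)))" for h
    by (rule expect_dep_pair_pmf[OF fin_P fin])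
  have noise_bound: "expect (iid_pmf M ?J) (\<lambda>ces. \<bar>sum_list (map noise ces)\<bar> / real M) \<le> sqrt (V / real M)"
  proof (rule expect_abs_iid_mean_le[OF fin_J _ _ M])
    show "expect ?J noise = 0"
      by (simp add: expect_J noise_def expect_diff fin unbiased cong: expect_cong)
    show "expect ?J (\<lambda>z. (noise z)\<^sup>2) \<le> V"
      unfolding expect_J noise_def
      using expect_mono[OF fin_P, of _ "\<lambda>_. V"] variance by simp
  qed
  have spread_bound: "expect (iid_pmf M ?J) (\<lambda>ces. \<bar>sum_list (map spread ces)\<bar> / real M)
      \<le> sqrt ((hi - lo)\<^sup>2 / 4 / real M)"
  proof (rule expect_abs_iid_mean_le[OF fin_J _ _ M])
    show "expect ?J spread = 0"
      by (simp add: expect_J spread_def expect_diff fin_P)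
    show "expect ?J (\<lambda>z. (spread z)\<^sup>2) \<le> (hi - lo)\<^sup>2 / 4"
      unfolding expect_J spread_def using popoviciu_inequality[OF fin_P range] by simp
  qed
  have split: "\<bar>sum_list (map snd ces) / real M - ?Ew\<bar>
      \<le> \<bar>sum_list (map noise ces)\<bar> / real M + \<bar>sum_list (map spread ces)\<bar> / real M"
    if "ces \<in> set_pmf (iid_pmf M ?J)" for ces
    using abs_mean_dev_le[where zs = ces and w = w and m = ?Ew] set_iid_pmfD[OF that] M
    by (simp add: noise_def[abs_def] spread_def[abs_def])
  have "expect (iid_pmf M ?J) (\<lambda>ces. \<bar>sum_list (map snd ces) / real M - ?Ew\<bar>)
      \<le> expect (iid_pmf M ?J)
          (\<lambda>ces. \<bar>sum_list (map noise ces)\<bar> / real M + \<bar>sum_list (map spread ces)\<bar> / real M)"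
    by (rule expect_mono[OF fin_iid split])
  also have "\<dots> = expect (iid_pmf M ?J) (\<lambda>ces. \<bar>sum_list (map noise ces)\<bar> / real M)
      + expect (iid_pmf M ?J) (\<lambda>ces. \<bar>sum_list (map spread ces)\<bar> / real M)"
    by (rule expect_add[OF fin_iid])
  also have "\<dots> \<le> sqrt (V / real M) + sqrt ((hi - lo)\<^sup>2 / 4 / real M)"
    using noise_bound spread_bound by (rule add_mono)
  also have "sqrt ((hi - lo)\<^sup>2 / 4 / real M) = (hi - lo) / (2 * sqrt (real M))"
    using range set_pmf_not_empty[of P] by (fastforce simp: real_sqrt_divide real_sqrt_mult)
  finally show ?thesis .
qed

section \<open>Tilted Markov chains\<close>

definition energy :: "(nat \<Rightarrow> 'x \<Rightarrow> 'x pmf) \<Rightarrow> ('x \<Rightarrow> real) \<Rightarrow> nat \<Rightarrow> 'x \<Rightarrow> real" where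
  "energy st W j x = expect (ref_down st j 0 x) W"

definition holds_on_reachable ::
  "(nat \<Rightarrow> 'x \<Rightarrow> 'x pmf) \<Rightarrow> (nat \<Rightarrow> 'x \<Rightarrow> bool) \<Rightarrow> nat \<Rightarrow> 'x \<Rightarrow> bool" where
  "holds_on_reachable st ok i x \<longleftrightarrow> (\<forall>j<i. \<forall>xs\<in>set_pmf (ref_down st (i - j) j x). ok j xs)"

lemma holds_on_reachable_step:
  assumes "holds_on_reachable st ok (Suc i) x" "x' \<in> set_pmf (st (Suc i) x)"
  shows "ok i x'" "holds_on_reachable st ok i x'"
proof -
  have "x' \<in> set_pmf (ref_down st (Suc i - i) i x)" using assms(2) by simp
  then show "ok i x'" using assms(1) unfolding holds_on_reachable_def by blast
  show "holds_on_reachable st ok i x'" unfolding holds_on_reachable_def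
  proof (intro allI impI ballI)
    fix j xs assume j: "j < i" and xs: "xs \<in> set_pmf (ref_down st (i - j) j x')"
    have "Suc i - j = Suc (i - j)" "j + Suc (i - j) = Suc i" using j by auto
    then have "xs \<in> set_pmf (ref_down st (Suc i - j) j x)" using xs assms(2) by auto
    then show "ok j xs" using assms(1) j unfolding holds_on_reachable_def by auto
  qed
qed

lemma energy_pos:
  fixes st :: "nat \<Rightarrow> 'x::finite \<Rightarrow> 'x pmf"
  shows "(\<And>x. W x > 0) \<Longrightarrow> energy st W j x > 0"
  unfolding energy_def by (rule expect_pos)

lemma energy_Suc:
  fixes st :: "nat \<Rightarrow> 'x::finite \<Rightarrow> 'x pmf"
  shows "energy st W (Suc i) x = expect (st (Suc i) x) (energy st W i)"
  by (simp add: energy_def[abs_def] expect_bind)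

lemma energy_range:
  fixes st :: "nat \<Rightarrow> 'x::finite \<Rightarrow> 'x pmf"
  assumes "\<And>x. lo \<le> W x \<and> W x \<le> hi"
  shows "lo \<le> energy st W j x \<and> energy st W j x \<le> hi"
  using expect_mono[of "ref_down st j 0 x" "\<lambda>_. lo" W] expect_mono[of "ref_down st j 0 x" W "\<lambda>_. hi"] assms
  by (simp add: energy_def)

lemma tilt_nonneg: "(\<And>x. w x \<ge> 0) \<Longrightarrow> tilt p w x \<ge> 0"
  unfolding tilt_def by (simp add: integral_nonneg)

lemma tilt_bind:
  fixes P :: "'a::finite pmf" and K :: "'a \<Rightarrow> 'b::finite pmf"
  assumes W_pos: "\<And>x. W x > 0"
  shows "tilt (bind_pmf P K) W x0 = (\<Sum>x'\<in>UNIV. tilt P (\<lambda>x'. expect (K x') W) x' * tilt (K x') W x0)"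
proof -
  have "expect (bind_pmf P K) W = expect P (\<lambda>x'. expect (K x') W)"
    by (simp add: expect_bind)
  then have "tilt (bind_pmf P K) W x0
      = (\<Sum>x'\<in>UNIV. pmf P x' * pmf (K x') x0 * W x0 / expect P (\<lambda>x'. expect (K x') W))"
    by (simp add: tilt_def pmf_bind expect_finite_UNIV[of P] sum_distrib_right sum_divide_distrib)
  also have "\<dots> = (\<Sum>x'\<in>UNIV. tilt P (\<lambda>x'. expect (K x') W) x' * tilt (K x') W x0)"
  proof (rule sum.cong[OF refl])
    fix x'
    have "expect (K x') W > 0" by (rule expect_pos[OF W_pos])
    then show "pmf P x' * pmf (K x') x0 * W x0 / expect P (\<lambda>x'. expect (K x') W)
        = tilt P (\<lambda>x'. expect (K x') W) x' * tilt (K x') W x0"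
      by (simp add: tilt_def)
  qed
  finally show ?thesis .
qed

lemma sum_tilt:
  fixes p :: "'a::finite pmf"
  shows "expect p w \<noteq> 0 \<Longrightarrow> (\<Sum>x\<in>UNIV. tilt p w x) = 1"
  by (simp add: tilt_def expect_finite_UNIV sum_divide_distrib[symmetric])

lemma TV_tilt_le_1:
  fixes q p :: "'a::finite pmf"
  assumes "\<And>x. w x \<ge> 0" "expect p w > 0"
  shows "TV (pmf q) (tilt p w) \<le> 1"
proof -
  have "(\<Sum>x\<in>UNIV. \<bar>pmf q x - tilt p w x\<bar>) \<le> (\<Sum>x\<in>UNIV. pmf q x + tilt p w x)"
    by (rule sum_mono) (use assms tilt_nonneg[of w p] in \<open>auto simp: abs_le_iff\<close>)
  also have "\<dots> = 2" using assms by (simp add: sum.distrib sum_pmf_eq_1 sum_tilt)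
  finally show ?thesis by (simp add: TV_def)
qed

lemma TV_bind_le:
  fixes Q :: "'a::finite pmf" and R :: "'a \<Rightarrow> 'b::finite pmf"
  assumes \<pi>: "\<And>x. \<pi> x \<ge> 0"
  shows "TV (pmf (bind_pmf Q R)) (\<lambda>x0. \<Sum>x'\<in>UNIV. \<pi> x' * T x' x0)
    \<le> TV (pmf Q) \<pi> + (\<Sum>x'\<in>UNIV. \<pi> x' * TV (pmf (R x')) (T x'))"
proof -
  have "2 * TV (pmf (bind_pmf Q R)) (\<lambda>x0. \<Sum>x'\<in>UNIV. \<pi> x' * T x' x0)
      = (\<Sum>x0\<in>UNIV. \<bar>\<Sum>x'\<in>UNIV. (pmf Q x' - \<pi> x') * pmf (R x') x0 + \<pi> x' * (pmf (R x') x0 - T x' x0)\<bar>)"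
    by (simp add: TV_def pmf_bind expect_finite_UNIV algebra_simps sum_subtractf)
  also have "\<dots> \<le> (\<Sum>x0\<in>UNIV. \<Sum>x'\<in>UNIV. \<bar>pmf Q x' - \<pi> x'\<bar> * pmf (R x') x0 + \<pi> x' * \<bar>pmf (R x') x0 - T x' x0\<bar>)"
    by (intro sum_mono order.trans[OF sum_abs] order.trans[OF abs_triangle_ineq])
      (simp add: abs_mult \<pi>)
  also have "\<dots> = 2 * TV (pmf Q) \<pi> + (\<Sum>x'\<in>UNIV. \<pi> x' * (2 * TV (pmf (R x')) (T x')))"
    by (subst sum.swap) (simp add: TV_def sum.distrib sum_distrib_left[symmetric] sum_pmf_eq_1)
  finally show ?thesis by (simp add: sum_distrib_left[symmetric] mult.left_commute[of _ 2])
qed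

lemma TV_bind_tilt_le:
  fixes P Q :: "'a::finite pmf" and K R :: "'a \<Rightarrow> 'b::finite pmf"
  assumes W_pos: "\<And>x. W x > 0"
  defines "E \<equiv> \<lambda>x'. expect (K x') W"
  shows "expect P E * TV (pmf (bind_pmf Q R)) (tilt (bind_pmf P K) W)
    \<le> expect P E * TV (pmf Q) (tilt P E) + (\<Sum>x'\<in>UNIV. pmf P x' * (E x' * TV (pmf (R x')) (tilt (K x') W)))"
proof -
  have E_pos: "E x' > 0" for x' unfolding E_def by (rule expect_pos[OF W_pos])
  have "tilt (bind_pmf P K) W = (\<lambda>x0. \<Sum>x'\<in>UNIV. tilt P E x' * tilt (K x') W x0)"
    unfolding E_def by (rule ext) (rule tilt_bind[OF W_pos])
  then have "TV (pmf (bind_pmf Q R)) (tilt (bind_pmf P K) W)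
      \<le> TV (pmf Q) (tilt P E) + (\<Sum>x'\<in>UNIV. tilt P E x' * TV (pmf (R x')) (tilt (K x') W))"
    using TV_bind_le[where \<pi> = "tilt P E" and T = "\<lambda>x'. tilt (K x') W"] E_pos
    by (simp add: tilt_nonneg less_imp_le)
  then have "expect P E * TV (pmf (bind_pmf Q R)) (tilt (bind_pmf P K) W)
      \<le> expect P E * (TV (pmf Q) (tilt P E) + (\<Sum>x'\<in>UNIV. tilt P E x' * TV (pmf (R x')) (tilt (K x') W)))"
    using expect_pos[of E P] E_pos by (simp add: mult_left_mono)
  also have "\<dots> = expect P E * TV (pmf Q) (tilt P E)
      + (\<Sum>x'\<in>UNIV. (expect P E * tilt P E x') * TV (pmf (R x')) (tilt (K x') W))"
    by (simp add: distrib_left sum_distrib_left mult.assoc)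
  also have "\<dots> = expect P E * TV (pmf Q) (tilt P E)
      + (\<Sum>x'\<in>UNIV. pmf P x' * (E x' * TV (pmf (R x')) (tilt (K x') W)))"
  proof -
    \<comment> \<open>the normalisation of the tilted step cancels against the energies one level down\<close>
    have "expect P E * tilt P E x' = pmf P x' * E x'" for x'
      using expect_pos[of E P] E_pos by (simp add: tilt_def)
    then show ?thesis by (simp add: mult.assoc)
  qed
  finally show ?thesis .
qed

lemma TV_ref_down_tilt_le:
  fixes st Q :: "nat \<Rightarrow> 'x::finite \<Rightarrow> 'x pmf"
  assumes W_pos: "\<And>x. W x > 0"
    and step: "\<And>i x. (\<And>x'. x' \<in> set_pmf (st (Suc i) x) \<Longrightarrow> ok i x') \<Longrightarrow>
       energy st W (Suc i) x * TV (pmf (Q (Suc i) x)) (tilt (st (Suc i) x) (energy st W i)) \<le> \<delta>"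
  shows "holds_on_reachable st ok i x \<Longrightarrow>
    energy st W i x * TV (pmf (ref_down Q i 0 x)) (tilt (ref_down st i 0 x) W) \<le> real i * \<delta>"
proof (induction i arbitrary: x)
  case 0
  have "tilt (return_pmf x) W = pmf (return_pmf x)"
    using W_pos[of x] by (auto simp: tilt_def indicator_def fun_eq_iff)
  then show ?case by (simp add: TV_def)
next
  case (Suc i)
  let ?P = "st (Suc i) x" and ?E = "energy st W i"
  let ?TV = "\<lambda>x'. TV (pmf (ref_down Q i 0 x')) (tilt (ref_down st i 0 x') W)"
  have "energy st W (Suc i) x * TV (pmf (ref_down Q (Suc i) 0 x)) (tilt (ref_down st (Suc i) 0 x) W)
      \<le> energy st W (Suc i) x * TV (pmf (Q (Suc i) x)) (tilt ?P ?E) + (\<Sum>x'\<in>UNIV. pmf ?P x' * (?E x' * ?TV x'))"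
  proof -
    have E: "(\<lambda>x'. expect (ref_down st i 0 x') W) = ?E" by (simp add: energy_def[abs_def])
    show ?thesis
      using TV_bind_tilt_le[where W = W and P = ?P and K = "ref_down st i 0" and Q = "Q (Suc i) x"
          and R = "ref_down Q i 0", OF W_pos]
      unfolding E by (simp add: energy_Suc energy_def[symmetric])
  qed
  also have "\<dots> \<le> \<delta> + (\<Sum>x'\<in>UNIV. pmf ?P x' * (real i * \<delta>))"
  proof (rule add_mono)
    show "energy st W (Suc i) x * TV (pmf (Q (Suc i) x)) (tilt ?P ?E) \<le> \<delta>"
      using step holds_on_reachable_step(1)[OF Suc.prems] by blast
    show "(\<Sum>x'\<in>UNIV. pmf ?P x' * (?E x' * ?TV x')) \<le> (\<Sum>x'\<in>UNIV. pmf ?P x' * (real i * \<delta>))"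
    proof (rule sum_mono)
      fix x'
      show "pmf ?P x' * (?E x' * ?TV x') \<le> pmf ?P x' * (real i * \<delta>)"
      proof (cases "x' \<in> set_pmf ?P")
        case True
        then show ?thesis
          using Suc.IH[OF holds_on_reachable_step(2)[OF Suc.prems True]] by (simp add: mult_left_mono)
      qed (simp add: set_pmf_iff)
    qed
  qed
  also have "\<dots> = \<delta> + real i * \<delta>"
    by (simp add: sum_distrib_right[symmetric] sum_pmf_eq_1)
  also have "\<dots> = real (Suc i) * \<delta>"
    by (simp add: algebra_simps)
  finally show ?case .
qed

definition likelihood_ratio_le ::
  "('y \<Rightarrow> nat \<Rightarrow> 'x \<Rightarrow> 'x pmf) \<Rightarrow> ('y \<Rightarrow> nat \<Rightarrow> 'x \<Rightarrow> 'x pmf) \<Rightarrow> 'y \<Rightarrow> real \<Rightarrow> nat \<Rightarrow> 'x \<Rightarrow> bool" where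
  "likelihood_ratio_le step small y L j xs \<longleftrightarrow>
     (\<forall>x0. (pmf (ref_post step y j xs) x0 > 0 \<longrightarrow> pmf (small y j xs) x0 > 0) \<and>
           pmf (ref_post step y j xs) x0 / pmf (small y j xs) x0 \<le> L)"

lemma ets_run_eq_ref_down:
  "ets_run step small r lam M K y i = ref_down (ets_step step small r lam M K y) i 0"
  by (induction i) (rule ext; simp)+

lemma ets_step_eq_sir_pmf:
  "ets_step step small r lam M K y i x = sir_pmf M (step y i x) (energy_est step small r lam K y (i - 1))"
  by (simp add: ets_step_def sir_pmf_def dep_pair_pmf_def resample_def[abs_def] map_pmf_def)

lemma energy_est_eq_is_estimate:
  "energy_est step small r lam K y j xs
    = map_pmf (is_estimate (ref_post step y j xs) (small y j xs) (\<lambda>x0. exp (r y x0 / lam))) (iid_pmf K (small y j xs))"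
  by (simp add: energy_est_def energy_hat_def[abs_def] is_estimate_def[abs_def])

lemma norm_const_eq_expect:
  "norm_const step r lam y I xT = expect (ref_post step y I xT) (\<lambda>x0. exp (r y x0 / lam))"
  by (simp add: norm_const_def expect_finite_UNIV)

lemma target_eq_tilt:
  "target step r lam y I xT = tilt (ref_post step y I xT) (\<lambda>x0. exp (r y x0 / lam))"
  by (simp add: fun_eq_iff target_def tilt_def norm_const_eq_expect)

lemma exp_range:
  fixes D t lam :: real
  assumes "- D \<le> t \<and> t \<le> D" "lam > 0"
  shows "exp (- D / lam) \<le> exp (t / lam) \<and> exp (t / lam) \<le> exp (D / lam)"
  using assms by (simp add: divide_right_mono field_simps)

lemma finite_set_energy_est:
  fixes step small :: "'y \<Rightarrow> nat \<Rightarrow> 'x::finite \<Rightarrow> 'x pmf"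
  shows "finite (set_pmf (energy_est step small r lam K y j c))"
  by (simp add: energy_est_eq_is_estimate finite_set_iid_pmf)

lemma energy_est_nonneg: "e \<in> set_pmf (energy_est step small r lam K y j c) \<Longrightarrow> 0 \<le> e"
  by (auto simp: energy_est_eq_is_estimate is_estimate_def intro!: divide_nonneg_nonneg sum_list_nonneg)

lemma energy_est_unbiased:
  fixes step small :: "'y \<Rightarrow> nat \<Rightarrow> 'x::finite \<Rightarrow> 'x pmf"
  assumes "likelihood_ratio_le step small y L j c" "K \<ge> 1"
  shows "expect (energy_est step small r lam K y j c) (\<lambda>e. e) = energy (step y) (\<lambda>x0. exp (r y x0 / lam)) j c"
  using expect_is_estimate[of "ref_post step y j c" "small y j c" K "\<lambda>x0. exp (r y x0 / lam)"] assms
  by (simp add: energy_est_eq_is_estimate likelihood_ratio_le_def energy_def ref_post_def)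

lemma energy_est_mean_square_error:
  fixes step small :: "'y \<Rightarrow> nat \<Rightarrow> 'x::finite \<Rightarrow> 'x pmf"
  assumes r_bound: "\<And>x0. - D \<le> r y x0 \<and> r y x0 \<le> D" and lam: "lam > 0"
    and ratio: "likelihood_ratio_le step small y L j c" and K: "K \<ge> 1"
  shows "expect (energy_est step small r lam K y j c)
      (\<lambda>e. (e - energy (step y) (\<lambda>x0. exp (r y x0 / lam)) j c)\<^sup>2) \<le> (L * exp (D / lam))\<^sup>2 / (4 * real K)"
proof -
  have "0 \<le> exp (r y x0 / lam) \<and> exp (r y x0 / lam) \<le> exp (D / lam)" for x0
    using exp_range[OF r_bound lam] by simp
  then show ?thesis
    using is_estimate_mean_square_error[of "ref_post step y j c" "small y j c" K L "\<lambda>x0. exp (r y x0 / lam)"]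
      ratio K
    by (simp add: energy_est_eq_is_estimate likelihood_ratio_le_def energy_def ref_post_def)
qed

lemma TV_ets_step_le:
  fixes step small :: "'y \<Rightarrow> nat \<Rightarrow> 'x::finite \<Rightarrow> 'x pmf"
  assumes r_bound: "\<And>x0. - D \<le> r y x0 \<and> r y x0 \<le> D" and lam: "lam > 0"
    and ratio: "\<And>x'. x' \<in> set_pmf (step y (Suc i) x) \<Longrightarrow> likelihood_ratio_le step small y L i x'"
    and M: "M \<ge> 1" and K: "K \<ge> 1"
  shows "energy (step y) (\<lambda>x0. exp (r y x0 / lam)) (Suc i) x
      * TV (pmf (ets_step step small r lam M K y (Suc i) x))
           (tilt (step y (Suc i) x) (energy (step y) (\<lambda>x0. exp (r y x0 / lam)) i))
    \<le> (sqrt ((L * exp (D / lam))\<^sup>2 / (4 * real K) / real M)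
        + (exp (D / lam) - exp (- D / lam)) / (2 * sqrt (real M))) / 2"
proof -
  let ?P = "step y (Suc i) x" and ?w = "energy (step y) (\<lambda>x0. exp (r y x0 / lam)) i"
  let ?est = "energy_est step small r lam K y i"
  let ?\<delta> = "sqrt ((L * exp (D / lam))\<^sup>2 / (4 * real K) / real M)
        + (exp (D / lam) - exp (- D / lam)) / (2 * sqrt (real M))"
  have E1: "expect ?P ?w = energy (step y) (\<lambda>x0. exp (r y x0 / lam)) (Suc i) x"
    by (simp add: energy_Suc)
  have E1_pos: "expect ?P ?w > 0" unfolding E1 by (rule energy_pos) simp
  have unbiased: "expect (?est c) (\<lambda>e. e) = ?w c" if "c \<in> set_pmf ?P" for c
    using energy_est_unbiased[OF ratio[OF that] K] .
  have variance: "expect (?est c) (\<lambda>e. (e - ?w c)\<^sup>2) \<le> (L * exp (D / lam))\<^sup>2 / (4 * real K)"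
    if "c \<in> set_pmf ?P" for c
    using energy_est_mean_square_error[where r = r and y = y, OF r_bound lam ratio[OF that] K] .
  have "TV (pmf (ets_step step small r lam M K y (Suc i) x)) (tilt ?P ?w)
      \<le> expect (iid_pmf M (dep_pair_pmf ?P ?est)) (\<lambda>ces. \<bar>sum_list (map snd ces) / real M - expect ?P ?w\<bar>)
        / (2 * expect ?P ?w)"
    unfolding ets_step_eq_sir_pmf
    using TV_sir_pmf_tilt_le[OF finite_set_energy_est energy_est_nonneg unbiased E1_pos M] by simp
  also have "\<dots> \<le> ?\<delta> / (2 * expect ?P ?w)"
  proof (rule divide_right_mono)
    show "expect (iid_pmf M (dep_pair_pmf ?P ?est)) (\<lambda>ces. \<bar>sum_list (map snd ces) / real M - expect ?P ?w\<bar>)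
        \<le> ?\<delta>"
      using energy_range[where W = "\<lambda>x0. exp (r y x0 / lam)", OF exp_range[OF r_bound lam]]
      by (intro expect_abs_sample_mean_dev_le[OF _ finite_set_energy_est unbiased variance _ M]) auto
  qed (use E1_pos in simp)
  finally show ?thesis
    using E1_pos unfolding E1 by (simp add: pos_le_divide_eq mult.commute)
qed

lemma TV_ets_output_le:
  fixes step small :: "'y \<Rightarrow> nat \<Rightarrow> 'x::finite \<Rightarrow> 'x pmf"
  assumes r_bound: "\<And>x0. - D \<le> r y x0 \<and> r y x0 \<le> D" and lam: "lam > 0"
    and ratio: "\<And>j xs. j < I \<Longrightarrow> xs \<in> set_pmf (ref_marg step y I xT j) \<Longrightarrow>
      likelihood_ratio_le step small y L j xs"
    and M: "M \<ge> 1" and K: "K \<ge> 1"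
  shows "TV (pmf (ets_output step small r lam M K I y xT)) (target step r lam y I xT)
    \<le> real I * (sqrt ((L * exp (D / lam))\<^sup>2 / (4 * real K) / real M)
                + (exp (D / lam) - exp (- D / lam)) / (2 * sqrt (real M)))
        / (2 * norm_const step r lam y I xT)"
proof -
  let ?W = "\<lambda>x0. exp (r y x0 / lam)"
  let ?\<delta> = "sqrt ((L * exp (D / lam))\<^sup>2 / (4 * real K) / real M)
                + (exp (D / lam) - exp (- D / lam)) / (2 * sqrt (real M))"
  have "energy (step y) ?W I xT
      * TV (pmf (ref_down (ets_step step small r lam M K y) I 0 xT)) (tilt (ref_down (step y) I 0 xT) ?W)
    \<le> real I * (?\<delta> / 2)"
  proof (rule TV_ref_down_tilt_le[where ok = "likelihood_ratio_le step small y L"])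
    show "holds_on_reachable (step y) (likelihood_ratio_le step small y L) I xT"
      using ratio by (simp add: holds_on_reachable_def ref_marg_def)
    show "energy (step y) ?W (Suc i) x
        * TV (pmf (ets_step step small r lam M K y (Suc i) x)) (tilt (step y (Suc i) x) (energy (step y) ?W i))
      \<le> ?\<delta> / 2"
      if "\<And>x'. x' \<in> set_pmf (step y (Suc i) x) \<Longrightarrow> likelihood_ratio_le step small y L i x'" for i x
      by (rule TV_ets_step_le[where step = step and r = r and y = y, OF r_bound lam that M K])
  qed simp
  moreover have "norm_const step r lam y I xT = energy (step y) ?W I xT"
    by (simp add: norm_const_eq_expect energy_def ref_post_def)
  moreover have "norm_const step r lam y I xT > 0"
    by (simp add: norm_const_eq_expect expect_pos)
  ultimately show ?thesis
    by (simp add: ets_output_def ets_run_eq_ref_down target_eq_tilt ref_post_def pos_le_divide_eq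
        mult.commute)
qed

lemma one_le_four_mult_exp:
  fixes t b :: real
  assumes "2 * t < b" "b > 0" "I \<ge> 1"
  shows "1 \<le> 4 * real I * exp (- t / b)"
proof -
  have "t / b < 1 / 2" using assms by (simp add: pos_divide_less_eq)
  then have "1 / 2 \<le> exp (- t / b)"
    using exp_ge_add_one_self[of "- t / b"] by simp
  then have "1 * (1 / 2) \<le> real I * exp (- t / b)"
    using assms by (intro mult_mono) auto
  then show ?thesis by simp
qed

lemma g_fun_nonneg:
  assumes "D \<ge> 0" "lam > 0"
  shows "g_fun \<epsilon> M K L lam D \<ge> 0"
proof -
  have "exp (- D / lam) \<le> exp (D / lam)"
    using assms by (simp add: divide_right_mono field_simps)
  then show ?thesis by (simp add: g_fun_def)
qed

lemma step_error_le_eps_plus_g_fun: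
  fixes L D lam \<epsilon> :: real
  assumes K_large: "(L * exp (D / lam))\<^sup>2 \<le> 4 * real K * \<epsilon>\<^sup>2"
    and M: "M \<ge> 1" and K: "K \<ge> 1" and eps: "\<epsilon> > 0" and L: "L > 0" and D: "D \<ge> 0" and lam: "lam > 0"
  shows "sqrt ((L * exp (D / lam))\<^sup>2 / (4 * real K) / real M)
      + (exp (D / lam) - exp (- D / lam)) / (2 * sqrt (real M)) \<le> \<epsilon> + g_fun \<epsilon> M K L lam D"
proof -
  define R where "R = L * exp (D / lam)"
  have "R > 0" using L by (simp add: R_def)
  have noise: "sqrt (R\<^sup>2 / (4 * real K) / real M) \<le> \<epsilon>"
  proof -
    have "R\<^sup>2 / (4 * real K) / real M \<le> R\<^sup>2 / (4 * real K) / 1"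
      by (rule divide_left_mono) (use M K in auto)
    also have "\<dots> \<le> \<epsilon>\<^sup>2"
      using K_large K by (simp add: R_def pos_divide_le_eq mult.commute)
    finally show ?thesis
      using eps real_sqrt_le_mono by fastforce
  qed
  have spread: "(exp (D / lam) - exp (- D / lam)) / (2 * sqrt (real M)) \<le> g_fun \<epsilon> M K L lam D"
  proof -
    have "1 \<le> 4 * real K * \<epsilon>\<^sup>2 / R\<^sup>2"
      using K_large \<open>R > 0\<close> L by (simp add: R_def le_divide_eq)
    then have "1 / real M * 1 \<le> 1 / real M * (4 * real K * \<epsilon>\<^sup>2 / R\<^sup>2)"
      by (rule mult_left_mono) simp
    then have "1 / real M \<le> 4 * real K * \<epsilon>\<^sup>2 / (real M * R\<^sup>2)"
      by simp
    then have "sqrt (1 / real M) \<le> sqrt (4 * real K * \<epsilon>\<^sup>2 / (real M * (L\<^sup>2 * exp (2 * D / lam))))"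
      by (simp add: R_def power_mult_distrib exp_double[symmetric] mult.assoc)
    moreover have "0 \<le> (exp (D / lam) - exp (- D / lam)) / 2"
      using D lam by (simp add: divide_right_mono field_simps)
    ultimately have "(exp (D / lam) - exp (- D / lam)) / 2 * sqrt (1 / real M)
        \<le> (exp (D / lam) - exp (- D / lam)) / 2
           * sqrt (4 * real K * \<epsilon>\<^sup>2 / (real M * (L\<^sup>2 * exp (2 * D / lam))))"
      by (rule mult_left_mono)
    then show ?thesis
      by (simp add: g_fun_def real_sqrt_divide mult.assoc)
  qed
  show ?thesis using noise spread by (simp add: R_def)
qed

theorem theorem1:
  fixes step small :: "'y \<Rightarrow> nat \<Rightarrow> 'x::finite \<Rightarrow> 'x pmf"
    and r :: "'y \<Rightarrow> 'x \<Rightarrow> real"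
    and y :: 'y and xT :: 'x
    and lam D L \<epsilon> :: real and M K I :: nat
  assumes r_bound: "\<And>x0. - D \<le> r y x0 \<and> r y x0 \<le> D"
    and lam: "lam > 0"
    and L: "L > 0"
    and ratio: "\<And>j xs x0. j < I \<Longrightarrow> xs \<in> set_pmf (ref_marg step y I xT j) \<Longrightarrow>
        (pmf (ref_post step y j xs) x0 > 0 \<longrightarrow> pmf (small y j xs) x0 > 0) \<and>
        pmf (ref_post step y j xs) x0 / pmf (small y j xs) x0 \<le> L"
    and M: "M \<ge> 1" and K: "K \<ge> 1" and I: "I \<ge> 1"
    and eps: "\<epsilon> > 0"
    and pos: "norm_const step r lam y I xT - \<epsilon> - g_fun \<epsilon> M K L lam D > 0"
  shows "TV (pmf (ets_output step small r lam M K I y xT)) (target step r lam y I xT)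
    \<le> real I * ((2 * \<epsilon> + g_fun \<epsilon> M K L lam D)
                 / (norm_const step r lam y I xT - \<epsilon> - g_fun \<epsilon> M K L lam D))
      + 4 * real I * exp (- (2 * real K * \<epsilon>^2) / (L^2 * exp (2 * D / lam)))"
proof -
  let ?C = "norm_const step r lam y I xT" and ?g = "g_fun \<epsilon> M K L lam D"
  let ?\<delta> = "sqrt ((L * exp (D / lam))\<^sup>2 / (4 * real K) / real M)
                + (exp (D / lam) - exp (- D / lam)) / (2 * sqrt (real M))"
  have D: "D \<ge> 0" using r_bound[of xT] by linarith
  have C_pos: "?C > 0" by (simp add: norm_const_eq_expect expect_pos)
  have g_nonneg: "?g \<ge> 0" using D lam by (rule g_fun_nonneg)
  show ?thesis
  proof (cases "(L * exp (D / lam))\<^sup>2 \<le> 4 * real K * \<epsilon>\<^sup>2")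
    case True
    have "TV (pmf (ets_output step small r lam M K I y xT)) (target step r lam y I xT)
        \<le> real I * ?\<delta> / (2 * ?C)"
      by (rule TV_ets_output_le[where r = r and y = y, OF r_bound lam _ M K])
        (simp add: likelihood_ratio_le_def ratio)
    also have "\<dots> \<le> real I * (\<epsilon> + ?g) / (2 * ?C)"
      using step_error_le_eps_plus_g_fun[OF True M K eps L D lam] C_pos
      by (intro divide_right_mono mult_left_mono) auto
    also have "\<dots> \<le> real I * ((2 * \<epsilon> + ?g) / (?C - \<epsilon> - ?g))"
      using frac_le[of "2 * \<epsilon> + ?g" "\<epsilon> + ?g" "?C - \<epsilon> - ?g" "2 * ?C"] eps g_nonneg pos C_pos
      by (simp add: mult_left_mono flip: times_divide_eq_right)
    finally show ?thesis by (simp add: add_increasing2)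
  next
    case False
    \<comment> \<open>for small \<open>K\<close> the Hoeffding-type term alone already exceeds the trivial bound \<open>1\<close>\<close>
    then have "1 \<le> 4 * real I * exp (- (2 * real K * \<epsilon>\<^sup>2) / (L\<^sup>2 * exp (2 * D / lam)))"
      using L I by (intro one_le_four_mult_exp) (simp_all add: power_mult_distrib exp_double[symmetric])
    moreover have "TV (pmf (ets_output step small r lam M K I y xT)) (target step r lam y I xT) \<le> 1"
      unfolding target_eq_tilt by (rule TV_tilt_le_1) (simp_all add: expect_pos less_imp_le)
    moreover have "0 \<le> real I * ((2 * \<epsilon> + ?g) / (?C - \<epsilon> - ?g))"
      using eps g_nonneg pos by simp
    ultimately show ?thesis by linarith
  qed
qed

end
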